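(* For any graph $G$ on $n\ge1$ vertices and any $\lambda>0$, \[ \frac{\alpha(G)}{\overline\alpha_G(\lambda)}\;\ge\;1+\frac{\alpha(G)}{\lambda n}, \] or equivalently $P_G(\lambda)\ge\left(\frac{\lambda}{\alpha(G)}+\frac1n\right)P_G'(\lambda)$. Equality holds when $G$ is a disjoint union of copies of $K_r$, for any $r\ge1$.
   Context: $\alpha(G)$ is the maximum size of an independent set of $G$. $P_G(\lambda)=\sum_J\lambda^{|J|}$ over all independent sets $J$ of $G$ (including the empty set), and $\overline\alpha_G(\lambda)=\lambda P_G'(\lambda)/P_G(\lambda)$ is the expected size of an independent set drawn from the hard-core model $\Pr[J]=\lambda^{|J|}/P_G(\lambda)$. $K_r$ is the complete graph on $r$ vertices. *)

theory Defs
  imports "HOL-Analysis.Analysis"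
begin

definition graph :: "'a set \<Rightarrow> ('a \<Rightarrow> 'a \<Rightarrow> bool) \<Rightarrow> bool" where
  "graph V E \<longleftrightarrow> finite V \<and> (\<forall>x y. E x y \<longrightarrow> E y x) \<and> (\<forall>x. \<not> E x x)
     \<and> (\<forall>x y. E x y \<longrightarrow> x \<in> V \<and> y \<in> V)"

definition indep_set :: "'a set \<Rightarrow> ('a \<Rightarrow> 'a \<Rightarrow> bool) \<Rightarrow> 'a set \<Rightarrow> bool" where
  "indep_set V E J \<longleftrightarrow> J \<subseteq> V \<and> (\<forall>x\<in>J. \<forall>y\<in>J. \<not> E x y)"

definition indep_num :: "'a set \<Rightarrow> ('a \<Rightarrow> 'a \<Rightarrow> bool) \<Rightarrow> nat" where
  "indep_num V E = Max (card ` {J. indep_set V E J})"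

definition indep_poly :: "'a set \<Rightarrow> ('a \<Rightarrow> 'a \<Rightarrow> bool) \<Rightarrow> real \<Rightarrow> real" where
  "indep_poly V E lam = (\<Sum>J\<in>{J. indep_set V E J}. lam ^ card J)"

text \<open>Expected size of a hard-core independent set: lambda P_G'(lambda) / P_G(lambda).\<close>
definition avg_indep :: "'a set \<Rightarrow> ('a \<Rightarrow> 'a \<Rightarrow> bool) \<Rightarrow> real \<Rightarrow> real" where
  "avg_indep V E lam = lam * deriv (indep_poly V E) lam / indep_poly V E lam"

end

theory Submission
  imports Defs
begin

(* Write i_k for the number of independent k-sets, a = alpha(G) and n = |V|. Since
   P' = sum_k (k+1) i_(k+1) lam^k and n (a P - lam P') = sum_k n (a - k) i_k lam^k, the inequality is
   the lam^k-weighted sum of the coefficient inequalities a (k+1) i_(k+1) <= n (a - k) i_k for k <= a.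
   These are proved by downward induction on k, starting from i_(a+1) = 0: double counting the pairs
   (J, v) of an independent k-set J and a vertex v extending it, followed by Cauchy-Schwarz, gives
   ((k+1) i_(k+1))^2 <= i_k (n i_(k+1) + k (k+2) i_(k+2)).
   In a disjoint union of copies of K_r every independent k-set is extended by exactly
   n - r k = r (a - k) vertices, which turns all coefficient inequalities into equalities. *)

definition indep_sets_of_card :: "'a set \<Rightarrow> ('a \<Rightarrow> 'a \<Rightarrow> bool) \<Rightarrow> nat \<Rightarrow> 'a set set" where
  "indep_sets_of_card V E k = {J. indep_set V E J \<and> card J = k}"

definition free_vertices :: "'a set \<Rightarrow> ('a \<Rightarrow> 'a \<Rightarrow> bool) \<Rightarrow> 'a set \<Rightarrow> 'a set" where
  "free_vertices V E J = {v\<in>V. v \<notin> J \<and> (\<forall>u\<in>J. \<not> E u v)}"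

definition closed_nbhd :: "'a set \<Rightarrow> ('a \<Rightarrow> 'a \<Rightarrow> bool) \<Rightarrow> 'a \<Rightarrow> 'a set" where
  "closed_nbhd V E u = {v\<in>V. v = u \<or> E u v}"

lemma free_vertices_eq_Diff_closed_nbhds:
  "J \<subseteq> V \<Longrightarrow> free_vertices V E J = V - (\<Union>u\<in>J. closed_nbhd V E u)"
  unfolding free_vertices_def closed_nbhd_def by blast

lemma deriv_power_sum:
  fixes c :: "nat \<Rightarrow> real"
  shows "deriv (\<lambda>x. \<Sum>k\<le>m. c k * x ^ k) x = (\<Sum>k<m. real (Suc k) * c (Suc k) * x ^ k)"
proof -
  have "deriv (\<lambda>x. \<Sum>k\<le>m. c k * x ^ k) x = (\<Sum>k\<le>m. c k * (real k * x ^ (k - Suc 0)))"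
    by (rule DERIV_imp_deriv) (intro DERIV_sum DERIV_cmult DERIV_pow)
  also have "\<dots> = (\<Sum>k<m. real (Suc k) * c (Suc k) * x ^ k)"
  proof (cases m)
    case (Suc m')
    then show ?thesis
      by (simp only: sum.atMost_Suc_shift lessThan_Suc_atMost) (simp add: mult_ac)
  qed simp
  finally show ?thesis .
qed

lemma hardcore_ratio_iff:
  fixes a p d n x :: real
  assumes "p > 0" "d > 0" "n > 0" "x > 0"
  shows "a / (x * d / p) \<ge> 1 + a / (x * n) \<longleftrightarrow> a * d \<le> n * (a * p - x * d)"
    and "a / (x * d / p) = 1 + a / (x * n) \<longleftrightarrow> a * d = n * (a * p - x * d)"
proof -
  have "a / (x * d / p) - (1 + a / (x * n)) = (n * (a * p - x * d) - a * d) / (x * d * n)"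
    using assms by (simp add: field_simps)
  moreover have "x * d * n > 0"
    using assms by simp
  ultimately show "a / (x * d / p) \<ge> 1 + a / (x * n) \<longleftrightarrow> a * d \<le> n * (a * p - x * d)"
    and "a / (x * d / p) = 1 + a / (x * n) \<longleftrightarrow> a * d = n * (a * p - x * d)"
    by (smt (verit) divide_eq_0_iff divide_pos_pos zero_le_divide_iff)+
qed

text \<open>The induction step of the coefficient bound, with a, b, c standing for i_k, i_(k+1), i_(k+2)
  and A for alpha.\<close>
lemma ratio_bound_step:
  fixes a b c n k A :: real
  assumes "a \<ge> 0" "b \<ge> 0" "c \<ge> 0" "n \<ge> 0" "k \<ge> 0" "A \<ge> k + 1"
    and recurrence: "((k + 1) * b)\<^sup>2 \<le> a * (n * b + k * ((k + 2) * c))"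
    and step: "A * (k + 2) * c \<le> n * (A - (k + 1)) * b"
  shows "A * (k + 1) * b \<le> n * (A - k) * a"
proof (cases "b = 0")
  case False
  then have pos: "(k + 1) * b > 0"
    using assms by simp
  have "((k + 1) * b) * (A * (k + 1) * b) = A * ((k + 1) * b)\<^sup>2"
    by (simp add: power2_eq_square)
  also have "\<dots> \<le> A * (a * (n * b + k * ((k + 2) * c)))"
    using recurrence assms by (intro mult_left_mono) auto
  also have "\<dots> = a * (A * n * b + k * (A * (k + 2) * c))"
    by (simp add: algebra_simps)
  also have "\<dots> \<le> a * (A * n * b + k * (n * (A - (k + 1)) * b))"
    using step assms by (intro mult_left_mono add_left_mono) auto
  also have "\<dots> = ((k + 1) * b) * (n * (A - k) * a)"
    by (simp add: algebra_simps)
  finally show ?thesis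
    using pos by (simp only: mult_le_cancel_left_pos)
qed (use assms in simp)

locale fin_graph =
  fixes V :: "'a set" and E :: "'a \<Rightarrow> 'a \<Rightarrow> bool"
  assumes graph: "graph V E"
begin

abbreviation indep_count :: "nat \<Rightarrow> real" where
  "indep_count k \<equiv> real (card (indep_sets_of_card V E k))"

lemma finite_vertices: "finite V"
  using graph by (simp add: graph_def)

lemma finite_indep_sets: "finite {J. indep_set V E J}"
  by (rule finite_subset[of _ "Pow V"]) (auto simp: finite_vertices indep_set_def)

lemma finite_indep_sets_of_card: "finite (indep_sets_of_card V E k)"
  by (rule finite_subset[OF _ finite_indep_sets]) (auto simp: indep_sets_of_card_def)

lemma finite_free_vertices: "finite (free_vertices V E J)"
  by (simp add: free_vertices_def finite_vertices)

lemma indep_set_finite: "indep_set V E J \<Longrightarrow> finite J"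
  by (auto simp: indep_set_def intro: finite_subset finite_vertices)

lemma indep_set_insert_free:
  "indep_set V E J \<Longrightarrow> v \<in> free_vertices V E J \<Longrightarrow> indep_set V E (insert v J)"
  using graph unfolding graph_def indep_set_def free_vertices_def by blast

lemma not_mem_free_vertices: "v \<in> free_vertices V E J \<Longrightarrow> v \<notin> J"
  by (simp add: free_vertices_def)

lemma indep_set_remove: "indep_set V E I \<Longrightarrow> indep_set V E (I - {u})"
  unfolding indep_set_def by blast

lemma mem_free_vertices_remove: "indep_set V E I \<Longrightarrow> u \<in> I \<Longrightarrow> u \<in> free_vertices V E (I - {u})"
  unfolding indep_set_def free_vertices_def by blast

lemma card_le_indep_num: "indep_set V E J \<Longrightarrow> card J \<le> indep_num V E"
  unfolding indep_num_def using finite_indep_sets by (intro Max_ge) auto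

lemma indep_num_attained: "\<exists>J. indep_set V E J \<and> card J = indep_num V E"
proof -
  have "{} \<in> {J. indep_set V E J}"
    by (simp add: indep_set_def)
  then have "indep_num V E \<in> card ` {J. indep_set V E J}"
    unfolding indep_num_def using finite_indep_sets by (intro Max_in) auto
  then show ?thesis
    by auto
qed

lemma indep_sets_of_card_eq_empty: "indep_num V E < k \<Longrightarrow> indep_sets_of_card V E k = {}"
  using card_le_indep_num by (fastforce simp: indep_sets_of_card_def)

lemma free_vertices_maximum_eq_empty:
  assumes "indep_set V E J" "card J = indep_num V E"
  shows "free_vertices V E J = {}"
proof (rule ccontr)
  assume "free_vertices V E J \<noteq> {}"
  then obtain v where v: "v \<in> free_vertices V E J"
    by blast
  then have "card (insert v J) = Suc (indep_num V E)"
    using assms indep_set_finite by (simp add: free_vertices_def)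
  with card_le_indep_num[OF indep_set_insert_free[OF assms(1) v]] show False
    by simp
qed

text \<open>The pairs (J, v) with v free for J correspond bijectively to the pairs (I, u) with u \<in> I,
  via I = insert v J.\<close>
lemma sum_free_vertices_eq_sum_remove:
  "(\<Sum>J\<in>indep_sets_of_card V E k. \<Sum>v\<in>free_vertices V E J. f J v)
     = (\<Sum>I\<in>indep_sets_of_card V E (Suc k). \<Sum>u\<in>I. f (I - {u}) u)"
proof -
  have "(\<Sum>J\<in>indep_sets_of_card V E k. \<Sum>v\<in>free_vertices V E J. f J v)
      = (\<Sum>(J, v)\<in>(SIGMA J:indep_sets_of_card V E k. free_vertices V E J). f J v)"
    by (rule sum.Sigma) (auto simp: finite_indep_sets_of_card finite_free_vertices)
  also have "\<dots> = (\<Sum>(I, u)\<in>(SIGMA I:indep_sets_of_card V E (Suc k). I). f (I - {u}) u)"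
    by (rule sum.reindex_bij_witness[where i="\<lambda>(I, u). (I - {u}, u)" and j="\<lambda>(J, v). (insert v J, v)"])
      (auto simp: indep_sets_of_card_def indep_set_finite indep_set_insert_free indep_set_remove
        mem_free_vertices_remove dest: not_mem_free_vertices)
  also have "\<dots> = (\<Sum>I\<in>indep_sets_of_card V E (Suc k). \<Sum>u\<in>I. f (I - {u}) u)"
    using finite_indep_sets_of_card
    by (intro sum.Sigma[symmetric]) (auto simp: indep_sets_of_card_def indep_set_finite)
  finally show ?thesis .
qed

lemma card_indep_sets_of_card_Suc:
  "real (Suc k) * indep_count (Suc k) = (\<Sum>J\<in>indep_sets_of_card V E k. real (card (free_vertices V E J)))"
proof -
  have "(\<Sum>J\<in>indep_sets_of_card V E k. real (card (free_vertices V E J)))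
      = (\<Sum>I\<in>indep_sets_of_card V E (Suc k). \<Sum>u\<in>I. 1)"
    using sum_free_vertices_eq_sum_remove[where f="\<lambda>_ _. 1::real"] by simp
  also have "\<dots> = (\<Sum>I\<in>indep_sets_of_card V E (Suc k). real (Suc k))"
    by (rule sum.cong) (auto simp: indep_sets_of_card_def)
  finally show ?thesis
    by simp
qed

text \<open>Removing u from I frees, besides the vertices already free for I, only u and
  neighbours of u, and no other removed vertex of I frees the same ones.\<close>
lemma sum_card_free_vertices_remove_le:
  assumes I: "indep_set V E I" "card I = Suc k"
  shows "(\<Sum>u\<in>I. real (card (free_vertices V E (I - {u}))))
    \<le> real (card V) + real k * real (card (free_vertices V E I))"
proof -
  let ?X = "free_vertices V E I"
  define D where "D u = free_vertices V E (I - {u}) - ?X" for u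
  have card_remove: "card (free_vertices V E (I - {u})) = card ?X + card (D u)" for u
  proof -
    have "free_vertices V E (I - {u}) = ?X \<union> D u"
      by (auto simp: D_def free_vertices_def)
    moreover have "card (?X \<union> D u) = card ?X + card (D u)"
      using finite_free_vertices by (intro card_Un_disjoint) (auto simp: D_def)
    ultimately show ?thesis
      by simp
  qed
  have "pairwise (\<lambda>u u'. D u \<inter> D u' = {}) I"
    unfolding pairwise_def D_def free_vertices_def by blast
  then have "(\<Sum>u\<in>I. card (D u)) = card (\<Union>u\<in>I. D u)"
    using indep_set_finite[OF I(1)] finite_free_vertices
    by (intro card_UN_disjoint[symmetric]) (auto simp: D_def pairwise_def)
  moreover have "card ((\<Union>u\<in>I. D u) \<union> ?X) = card (\<Union>u\<in>I. D u) + card ?X"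
    using indep_set_finite[OF I(1)] finite_free_vertices
    by (intro card_Un_disjoint) (auto simp: D_def)
  ultimately have "(\<Sum>u\<in>I. card (D u)) + card ?X = card ((\<Union>u\<in>I. D u) \<union> ?X)"
    by simp
  also have "\<dots> \<le> card V"
    using finite_vertices by (intro card_mono) (auto simp: D_def free_vertices_def)
  finally have "(\<Sum>u\<in>I. card (D u)) + card ?X \<le> card V" .
  then have "(\<Sum>u\<in>I. card (free_vertices V E (I - {u}))) \<le> card V + k * card ?X"
    using I(2) by (simp add: card_remove sum.distrib)
  then show ?thesis
    by (metis of_nat_add of_nat_le_iff of_nat_mult of_nat_sum)
qed

text \<open>Cauchy--Schwarz on the free-vertex counts of the independent k-sets, whose sum of squares
  is bounded by double counting again.\<close>
lemma indep_count_recurrence: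
  "(real (Suc k) * indep_count (Suc k))\<^sup>2
     \<le> indep_count k * (real (card V) * indep_count (Suc k)
          + real k * (real (Suc (Suc k)) * indep_count (Suc (Suc k))))"
    (is "_ \<le> _ * ?bound")
proof -
  let ?m = "\<lambda>J. real (card (free_vertices V E J))"
  have "(\<Sum>J\<in>indep_sets_of_card V E k. (?m J)\<^sup>2)
      = (\<Sum>I\<in>indep_sets_of_card V E (Suc k). \<Sum>u\<in>I. ?m (I - {u}))"
    using sum_free_vertices_eq_sum_remove[where f="\<lambda>J _. ?m J"] by (simp add: power2_eq_square)
  also have "\<dots> \<le> (\<Sum>I\<in>indep_sets_of_card V E (Suc k). real (card V) + real k * ?m I)"
    by (rule sum_mono) (auto simp: indep_sets_of_card_def intro: sum_card_free_vertices_remove_le)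
  also have "\<dots> = real (card V) * indep_count (Suc k)
      + real k * (\<Sum>I\<in>indep_sets_of_card V E (Suc k). ?m I)"
    by (simp add: sum.distrib sum_distrib_left)
  also have "(\<Sum>I\<in>indep_sets_of_card V E (Suc k). ?m I) = real (Suc (Suc k)) * indep_count (Suc (Suc k))"
    by (rule card_indep_sets_of_card_Suc[symmetric])
  finally have squares: "(\<Sum>J\<in>indep_sets_of_card V E k. (?m J)\<^sup>2) \<le> ?bound" .
  have "(real (Suc k) * indep_count (Suc k))\<^sup>2 \<le> (\<Sum>J\<in>indep_sets_of_card V E k. (?m J)\<^sup>2) * indep_count k"
    unfolding card_indep_sets_of_card_Suc by (rule sum_squared_le_sum_of_squares)
  also have "\<dots> \<le> ?bound * indep_count k"
    using squares by (rule mult_right_mono) simp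
  finally show ?thesis
    by (simp add: mult.commute)
qed

lemma indep_count_ratio_le:
  "k \<le> indep_num V E \<Longrightarrow> real (indep_num V E) * real (Suc k) * indep_count (Suc k)
     \<le> real (card V) * (real (indep_num V E) - real k) * indep_count k"
proof (induction "indep_num V E - k" arbitrary: k)
  case 0
  then have "indep_sets_of_card V E (Suc k) = {}"
    by (simp add: indep_sets_of_card_eq_empty)
  then show ?case
    using 0 by simp
next
  case (Suc j)
  then have "real (indep_num V E) \<ge> real k + 1"
    by simp
  moreover have "real (indep_num V E) * real (Suc (Suc k)) * indep_count (Suc (Suc k))
     \<le> real (card V) * (real (indep_num V E) - real (Suc k)) * indep_count (Suc k)"
    using Suc by (intro Suc.hyps(1)) auto
  ultimately show ?case
    using ratio_bound_step[of "indep_count k" "indep_count (Suc k)" "indep_count (Suc (Suc k))"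
        "real (card V)" "real k" "real (indep_num V E)"] indep_count_recurrence[of k]
    by (simp add: add.commute)
qed

lemma indep_poly_eq_sum: "indep_poly V E x = (\<Sum>k\<le>indep_num V E. indep_count k * x ^ k)"
proof -
  have "indep_poly V E x = (\<Sum>k\<le>indep_num V E. \<Sum>J\<in>{J \<in> {J. indep_set V E J}. card J = k}. x ^ card J)"
    unfolding indep_poly_def
    by (rule sum.group[symmetric]) (use finite_indep_sets card_le_indep_num in auto)
  also have "\<dots> = (\<Sum>k\<le>indep_num V E. \<Sum>J\<in>indep_sets_of_card V E k. x ^ k)"
    by (intro sum.cong) (auto simp: indep_sets_of_card_def)
  finally show ?thesis
    by simp
qed

lemma deriv_indep_poly:
  "deriv (indep_poly V E) x = (\<Sum>k\<le>indep_num V E. real (Suc k) * indep_count (Suc k) * x ^ k)"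
proof -
  have "indep_poly V E = (\<lambda>x. \<Sum>k\<le>Suc (indep_num V E). indep_count k * x ^ k)"
    by (simp add: fun_eq_iff indep_poly_eq_sum indep_sets_of_card_eq_empty)
  then show ?thesis
    by (simp only: deriv_power_sum lessThan_Suc_atMost)
qed

lemma indep_poly_deficit:
  "real (card V) * (real (indep_num V E) * indep_poly V E x - x * deriv (indep_poly V E) x)
     = (\<Sum>k\<le>indep_num V E. real (card V) * (real (indep_num V E) - real k) * indep_count k * x ^ k)"
proof -
  have "x * deriv (indep_poly V E) x = (\<Sum>k\<le>Suc (indep_num V E). real k * indep_count k * x ^ k)"
    by (simp only: sum.atMost_Suc_shift deriv_indep_poly sum_distrib_left) (simp add: mult_ac)
  also have "\<dots> = (\<Sum>k\<le>indep_num V E. real k * indep_count k * x ^ k)"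
    by (simp add: indep_sets_of_card_eq_empty)
  finally show ?thesis
    by (simp add: indep_poly_eq_sum sum_distrib_left algebra_simps flip: sum_subtractf)
qed

lemma deriv_indep_poly_le_deficit:
  assumes "x \<ge> 0"
  shows "real (indep_num V E) * deriv (indep_poly V E) x
    \<le> real (card V) * (real (indep_num V E) * indep_poly V E x - x * deriv (indep_poly V E) x)"
proof -
  have "real (indep_num V E) * deriv (indep_poly V E) x
      = (\<Sum>k\<le>indep_num V E. real (indep_num V E) * real (Suc k) * indep_count (Suc k) * x ^ k)"
    by (simp add: deriv_indep_poly sum_distrib_left mult.assoc)
  also have "\<dots> \<le> (\<Sum>k\<le>indep_num V E. real (card V) * (real (indep_num V E) - real k) * indep_count k * x ^ k)"
    using indep_count_ratio_le assms by (intro sum_mono mult_right_mono) auto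
  finally show ?thesis
    by (simp only: indep_poly_deficit)
qed

lemma indep_poly_ge_1:
  assumes "x \<ge> 0"
  shows "1 \<le> indep_poly V E x"
proof -
  have "x ^ card ({} :: 'a set) \<le> indep_poly V E x"
    unfolding indep_poly_def using assms
    by (intro member_le_sum[where f="\<lambda>J. x ^ card J"] finite_indep_sets) (simp_all add: indep_set_def)
  then show ?thesis
    by simp
qed

lemma deriv_indep_poly_pos:
  assumes "V \<noteq> {}" "x \<ge> 0"
  shows "deriv (indep_poly V E) x > 0"
proof -
  obtain v where "v \<in> V"
    using assms(1) by blast
  then have "{v} \<in> indep_sets_of_card V E 1"
    using graph by (simp add: indep_sets_of_card_def indep_set_def graph_def)
  then have "0 < indep_count 1"
    using finite_indep_sets_of_card card_gt_0_iff by fastforce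
  also have "\<dots> = real (Suc 0) * indep_count (Suc 0) * x ^ 0"
    by simp
  also have "\<dots> \<le> deriv (indep_poly V E) x"
    unfolding deriv_indep_poly using assms(2)
    by (intro member_le_sum) auto
  finally show ?thesis .
qed

end

locale clique_partition = fin_graph +
  fixes Pt :: "'a set set" and r :: nat
  assumes partition: "partition_on V Pt"
    and card_block: "\<forall>B\<in>Pt. card B = r"
    and adjacent_iff: "\<forall>x\<in>V. \<forall>y\<in>V. E x y \<longleftrightarrow> x \<noteq> y \<and> (\<exists>B\<in>Pt. x \<in> B \<and> y \<in> B)"
begin

lemma closed_nbhd_mem_partition:
  assumes "u \<in> V"
  shows "closed_nbhd V E u \<in> Pt"
proof -
  obtain B where B: "B \<in> Pt" "u \<in> B"
    using assms partition_onD1[OF partition] by blast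
  have "B \<subseteq> V"
    using B partition_onD1[OF partition] by blast
  moreover have "B' = B" if "B' \<in> Pt" "u \<in> B'" for B'
    using that B disjointD[OF partition_onD2[OF partition]] by blast
  ultimately have "closed_nbhd V E u = B"
    using assms B adjacent_iff unfolding closed_nbhd_def by blast
  with B show ?thesis
    by simp
qed

lemma card_Union_closed_nbhd:
  assumes J: "indep_set V E J"
  shows "card (\<Union>u\<in>J. closed_nbhd V E u) = r * card J"
proof -
  have JV: "J \<subseteq> V"
    using J by (simp add: indep_set_def)
  have "closed_nbhd V E u \<inter> closed_nbhd V E u' = {}" if "u \<in> J" "u' \<in> J" "u \<noteq> u'" for u u'
  proof (rule disjointD[OF partition_onD2[OF partition]])
    show "closed_nbhd V E u \<in> Pt" "closed_nbhd V E u' \<in> Pt"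
      using that JV closed_nbhd_mem_partition by auto
    show "closed_nbhd V E u \<noteq> closed_nbhd V E u'"
      using that J JV unfolding indep_set_def closed_nbhd_def by blast
  qed
  then have "card (\<Union>u\<in>J. closed_nbhd V E u) = (\<Sum>u\<in>J. card (closed_nbhd V E u))"
    using indep_set_finite[OF J] finite_vertices
    by (intro card_UN_disjoint) (auto simp: closed_nbhd_def)
  also have "\<dots> = r * card J"
    using JV closed_nbhd_mem_partition card_block by (simp add: subset_iff)
  finally show ?thesis .
qed

lemma card_free_vertices_clique:
  assumes J: "indep_set V E J"
  shows "card (free_vertices V E J) = card V - r * card J"
proof -
  have "J \<subseteq> V" and "(\<Union>u\<in>J. closed_nbhd V E u) \<subseteq> V"
    using J by (auto simp: indep_set_def closed_nbhd_def)
  then show ?thesis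
    using finite_vertices card_Union_closed_nbhd[OF J]
    by (simp add: free_vertices_eq_Diff_closed_nbhds card_Diff_subset finite_subset)
qed

lemma card_vertices_eq: "card V = r * indep_num V E"
proof -
  obtain J where J: "indep_set V E J" "card J = indep_num V E"
    using indep_num_attained by blast
  have "card V - r * indep_num V E = 0"
    using card_free_vertices_clique[OF J(1)] free_vertices_maximum_eq_empty[OF J] J(2) by simp
  moreover have "r * indep_num V E \<le> card V"
    using card_Union_closed_nbhd[OF J(1)] J(2) finite_vertices
    by (metis (no_types, lifting) UN_subset_iff card_mono closed_nbhd_def mem_Collect_eq subsetI)
  ultimately show ?thesis
    by simp
qed

lemma indep_count_ratio_eq:
  assumes "k \<le> indep_num V E"
  shows "real (indep_num V E) * real (Suc k) * indep_count (Suc k)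
    = real (card V) * (real (indep_num V E) - real k) * indep_count k"
proof -
  have free: "real (card (free_vertices V E J)) = real r * (real (indep_num V E) - real k)"
    if "J \<in> indep_sets_of_card V E k" for J
    using that assms card_free_vertices_clique card_vertices_eq
    by (simp add: indep_sets_of_card_def of_nat_diff algebra_simps)
  have "real (Suc k) * indep_count (Suc k)
      = (\<Sum>J\<in>indep_sets_of_card V E k. real r * (real (indep_num V E) - real k))"
    unfolding card_indep_sets_of_card_Suc by (rule sum.cong) (simp_all add: free)
  then have "real (indep_num V E) * (real (Suc k) * indep_count (Suc k))
      = real (indep_num V E) * (real r * (real (indep_num V E) - real k) * indep_count k)"
    by simp
  then show ?thesis
    by (simp add: card_vertices_eq mult_ac del: of_nat_Suc)
qed

lemma deriv_indep_poly_eq_deficit: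
  "real (indep_num V E) * deriv (indep_poly V E) x
    = real (card V) * (real (indep_num V E) * indep_poly V E x - x * deriv (indep_poly V E) x)"
proof -
  have "real (indep_num V E) * deriv (indep_poly V E) x
      = (\<Sum>k\<le>indep_num V E. real (indep_num V E) * real (Suc k) * indep_count (Suc k) * x ^ k)"
    by (simp add: deriv_indep_poly sum_distrib_left mult.assoc)
  also have "\<dots> = (\<Sum>k\<le>indep_num V E. real (card V) * (real (indep_num V E) - real k) * indep_count k * x ^ k)"
    by (rule sum.cong) (simp_all add: indep_count_ratio_eq del: of_nat_Suc)
  finally show ?thesis
    by (simp only: indep_poly_deficit)
qed

end

theorem theorem5p6:
  fixes V :: "'a set" and E :: "'a \<Rightarrow> 'a \<Rightarrow> bool" and lam :: real
  assumes "graph V E" and "V \<noteq> {}" and "lam > 0"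
  shows "real (indep_num V E) / avg_indep V E lam \<ge> 1 + real (indep_num V E) / (lam * real (card V))
    \<and> ((\<exists>r::nat. r \<ge> 1 \<and> (\<exists>Pt. partition_on V Pt \<and> (\<forall>B\<in>Pt. card B = r) \<and>
            (\<forall>x\<in>V. \<forall>y\<in>V. E x y \<longleftrightarrow> x \<noteq> y \<and> (\<exists>B\<in>Pt. x \<in> B \<and> y \<in> B))))
         \<longrightarrow> real (indep_num V E) / avg_indep V E lam = 1 + real (indep_num V E) / (lam * real (card V)))"
proof -
  interpret fin_graph V E
    by (rule fin_graph.intro) (rule assms(1))
  have pos: "indep_poly V E lam > 0" "deriv (indep_poly V E) lam > 0" "real (card V) > 0"
    using indep_poly_ge_1[of lam] deriv_indep_poly_pos[OF assms(2), of lam] assms(2,3)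
    by (auto simp: finite_vertices card_gt_0_iff)
  note ratio_iff = hardcore_ratio_iff[OF pos assms(3), folded avg_indep_def]
  show ?thesis
  proof (intro conjI impI)
    show "real (indep_num V E) / avg_indep V E lam \<ge> 1 + real (indep_num V E) / (lam * real (card V))"
      using ratio_iff(1) deriv_indep_poly_le_deficit assms(3) by simp
  next
    assume "\<exists>r::nat. r \<ge> 1 \<and> (\<exists>Pt. partition_on V Pt \<and> (\<forall>B\<in>Pt. card B = r) \<and>
      (\<forall>x\<in>V. \<forall>y\<in>V. E x y \<longleftrightarrow> x \<noteq> y \<and> (\<exists>B\<in>Pt. x \<in> B \<and> y \<in> B)))"
    then obtain r Pt where "clique_partition V E Pt r"
      using assms(1) by (auto intro: clique_partition.intro fin_graph.intro clique_partition_axioms.intro)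
    then show "real (indep_num V E) / avg_indep V E lam = 1 + real (indep_num V E) / (lam * real (card V))"
      using ratio_iff(2) clique_partition.deriv_indep_poly_eq_deficit by blast
  qed
qed

end
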